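(* Let $q$ be a prime power and let $M$ be a simple and cosimple matroid representable over $GF(q)$ that has two distinct loose elements $e$ and $f$. Then $r(M)\le 2q$.
   Context: All matroids are finite. An element $t$ of a matroid $M$ is loose if every circuit of $M$ containing $t$ has size at least the rank $r(M)$. A matroid is cosimple if its dual is simple. *)

theory Defs
  imports "HOL-Computational_Algebra.Primes"
begin

definition matroid :: "'a set \<Rightarrow> 'a set set \<Rightarrow> bool" where
  "matroid E \<I> \<longleftrightarrow> finite E \<and> (\<forall>X\<in>\<I>. X \<subseteq> E) \<and> {} \<in> \<I>
     \<and> (\<forall>X Y. Y \<in> \<I> \<and> X \<subseteq> Y \<longrightarrow> X \<in> \<I>)
     \<and> (\<forall>X Y. X \<in> \<I> \<and> Y \<in> \<I> \<and> card X < card Y \<longrightarrow> (\<exists>y\<in>Y - X. insert y X \<in> \<I>))"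

definition mrank :: "'a set \<Rightarrow> 'a set set \<Rightarrow> nat" where
  "mrank E \<I> = Max (card ` {X. X \<subseteq> E \<and> X \<in> \<I>})"

definition circuit :: "'a set \<Rightarrow> 'a set set \<Rightarrow> 'a set \<Rightarrow> bool" where
  "circuit E \<I> C \<longleftrightarrow> C \<subseteq> E \<and> C \<notin> \<I> \<and> (\<forall>D. D \<subset> C \<longrightarrow> D \<in> \<I>)"

definition bases :: "'a set \<Rightarrow> 'a set set \<Rightarrow> 'a set set" where
  "bases E \<I> = {B. B \<in> \<I> \<and> (\<forall>X\<in>\<I>. B \<subseteq> X \<longrightarrow> X = B)}"

definition dual_indep :: "'a set \<Rightarrow> 'a set set \<Rightarrow> 'a set set" where
  "dual_indep E \<I> = {X. \<exists>B\<in>bases E \<I>. X \<subseteq> E - B}"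

text \<open>Simple: no loops and no parallel pairs, i.e. no circuit of size at most 2.\<close>
definition simple_matroid :: "'a set \<Rightarrow> 'a set set \<Rightarrow> bool" where
  "simple_matroid E \<I> \<longleftrightarrow> (\<forall>C. circuit E \<I> C \<longrightarrow> card C \<ge> 3)"

definition cosimple_matroid :: "'a set \<Rightarrow> 'a set set \<Rightarrow> bool" where
  "cosimple_matroid E \<I> \<longleftrightarrow> simple_matroid E (dual_indep E \<I>)"

definition loose :: "'a set \<Rightarrow> 'a set set \<Rightarrow> 'a \<Rightarrow> bool" where
  "loose E \<I> t \<longleftrightarrow> t \<in> E \<and> (\<forall>C. circuit E \<I> C \<and> t \<in> C \<longrightarrow> card C \<ge> mrank E \<I>)"

definition lin_indep_family :: "('a \<Rightarrow> nat \<Rightarrow> 'f::field) \<Rightarrow> 'a set \<Rightarrow> bool" where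
  "lin_indep_family v X \<longleftrightarrow>
     (\<forall>c. (\<forall>i. (\<Sum>e\<in>X. c e * v e i) = 0) \<longrightarrow> (\<forall>e\<in>X. c e = 0))"

definition representable_over :: "'f::field itself \<Rightarrow> 'a set \<Rightarrow> 'a set set \<Rightarrow> bool" where
  "representable_over _ E \<I> \<longleftrightarrow>
     (\<exists>n. \<exists>v :: 'a \<Rightarrow> nat \<Rightarrow> 'f. (\<forall>e\<in>E. \<forall>i\<ge>n. v e i = 0) \<and>
        (\<forall>X. X \<subseteq> E \<longrightarrow> (X \<in> \<I> \<longleftrightarrow> lin_indep_family v X)))"

definition prime_power :: "nat \<Rightarrow> bool" where
  "prime_power q \<longleftrightarrow> (\<exists>p k. prime p \<and> k \<ge> 1 \<and> q = p ^ k)"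

end

theory Submission
  imports Defs
begin

text \<open>
  Extend \<open>{e, f}\<close> to a basis \<open>B\<close> of \<open>M\<close>, so \<open>|B| = r(M)\<close>, and write every element in
  \<open>B\<close>-coordinates. Since \<open>e\<close> and \<open>f\<close> are loose, every linear relation with a non-zero
  coefficient at \<open>e\<close> or \<open>f\<close> has at least \<open>r(M)\<close> non-zero coefficients. Applied to the
  fundamental relation of an element \<open>g \<notin> B\<close>, this says that the coordinate vector of \<open>g\<close>
  has at most one zero entry if its \<open>e\<close>-entry is non-zero; applied to the relation of
  \<open>g - \<lambda>h\<close> it says that the coordinate vectors of \<open>g\<close> and \<open>\<lambda>h\<close> agree in at most two
  entries if they differ at \<open>e\<close> or at \<open>f\<close>. Cosimplicity supplies such \<open>g\<close> and \<open>h\<close> outside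
  \<open>B\<close> whose coordinates are not proportional on \<open>{e, f}\<close>: the non-zero set of a non-zero
  linear functional is codependent, so it has at least three elements and cannot lie inside
  \<open>B\<close>, where the functional only sees \<open>e\<close> and \<open>f\<close>. Sorting the elements of \<open>B\<close> by the
  ratio of their \<open>g\<close>- and \<open>h\<close>-coordinates now gives \<open>r(M) \<le> 1 + 1 + 2(q - 1) = 2q\<close>.
\<close>

lemma dependent_contains_circuit:
  assumes "finite W" "W \<subseteq> E" "W \<notin> I"
  obtains C where "C \<subseteq> W" "circuit E I C"
proof -
  have "finite {D. D \<subseteq> W \<and> D \<notin> I}"
    by (rule finite_subset[of _ "Pow W"]) (use assms(1) in auto)
  then obtain C where C: "C \<subseteq> W" "C \<notin> I"
    and min: "\<And>D. D \<subseteq> W \<Longrightarrow> D \<notin> I \<Longrightarrow> D \<subseteq> C \<Longrightarrow> C = D"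
    using finite_has_minimal2[of "{D. D \<subseteq> W \<and> D \<notin> I}" W] assms(3) by auto
  have "D \<in> I" if "D \<subset> C" for D
    using that C(1) min[of D] by blast
  then have "circuit E I C" using C assms(2) unfolding circuit_def by blast
  with C(1) show ?thesis by (rule that)
qed

lemma simple_matroid_dependent_card:
  assumes "simple_matroid E I" "finite E" "W \<subseteq> E" "W \<notin> I"
  shows "3 \<le> card W"
proof -
  have "finite W" using assms(2,3) by (rule finite_subset[rotated])
  then obtain C where "C \<subseteq> W" "circuit E I C"
    using dependent_contains_circuit assms(3,4) by blast
  then have "3 \<le> card C" using assms(1) unfolding simple_matroid_def by blast
  also have "\<dots> \<le> card W" using \<open>finite W\<close> \<open>C \<subseteq> W\<close> by (rule card_mono)
  finally show ?thesis .
qed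

lemma matroid_finite: "matroid E I \<Longrightarrow> finite E"
  by (simp add: matroid_def)

lemma matroid_indep_subset: "matroid E I \<Longrightarrow> X \<in> I \<Longrightarrow> X \<subseteq> E"
  by (simp add: matroid_def subset_iff)

lemma matroid_finite_indeps: "matroid E I \<Longrightarrow> finite I"
  by (metis Pow_iff finite_Pow_iff finite_subset matroid_finite matroid_indep_subset subsetI)

lemma matroid_augment:
  assumes "matroid E I" "X \<in> I" "Y \<in> I" "card X < card Y"
  obtains y where "y \<in> Y - X" "insert y X \<in> I"
proof -
  have "\<forall>X Y. X \<in> I \<and> Y \<in> I \<and> card X < card Y \<longrightarrow> (\<exists>y\<in>Y - X. insert y X \<in> I)"
    using assms(1) by (simp add: matroid_def)
  with assms(2-4) that show ?thesis by blast
qed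

lemma basis_insert_dependent: "B \<in> bases E I \<Longrightarrow> x \<notin> B \<Longrightarrow> insert x B \<notin> I"
  unfolding bases_def by blast

lemma extend_to_basis_of_rank:
  assumes M: "matroid E I" and "X \<in> I"
  obtains B where "X \<subseteq> B" "B \<in> bases E I" "card B = mrank E I"
proof -
  obtain B where B: "B \<in> I" "X \<subseteq> B" and "\<And>Y. Y \<in> I \<Longrightarrow> B \<subseteq> Y \<Longrightarrow> B = Y"
    using finite_has_maximal2[of "{Y\<in>I. X \<subseteq> Y}" X] matroid_finite_indeps[OF M] \<open>X \<in> I\<close>
    by auto
  then have basis: "B \<in> bases E I" unfolding bases_def by blast
  have "card Y \<le> card B" if "Y \<in> I" for Y
  proof (rule ccontr)
    assume "\<not> card Y \<le> card B"
    then obtain y where "y \<notin> B" "insert y B \<in> I"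
      using matroid_augment[OF M \<open>B \<in> I\<close> \<open>Y \<in> I\<close>] by auto
    then show False using basis_insert_dependent[OF basis] by blast
  qed
  moreover have "finite {Y. Y \<subseteq> E \<and> Y \<in> I}"
    using matroid_finite[OF M] by simp
  ultimately have "mrank E I = card B"
    unfolding mrank_def using matroid_indep_subset[OF M B(1)] B(1) by (intro Max_eqI) auto
  then show ?thesis using that[OF B(2) basis] by simp
qed

locale represented_matroid =
  fixes E :: "'a set" and I :: "'a set set" and v :: "'a \<Rightarrow> nat \<Rightarrow> 'k::field"
  assumes matroid: "matroid E I"
    and indep_iff: "X \<subseteq> E \<Longrightarrow> X \<in> I \<longleftrightarrow> lin_indep_family v X"
begin

definition linear_relation :: "('a \<Rightarrow> 'k) \<Rightarrow> bool" where
  "linear_relation c \<longleftrightarrow> (\<forall>i. (\<Sum>x\<in>E. c x * v x i) = 0)"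

definition support :: "('a \<Rightarrow> 'k) \<Rightarrow> 'a set" where
  "support c = {x\<in>E. c x \<noteq> 0}"

lemma finite_E: "finite E"
  using matroid by (rule matroid_finite)

lemma finite_support: "finite (support c)"
  using finite_E unfolding support_def by simp

lemma sum_over_support:
  assumes "support c \<subseteq> X" "X \<subseteq> E"
  shows "(\<Sum>x\<in>E. c x * w x) = (\<Sum>x\<in>X. c x * w x)"
  using assms finite_E unfolding support_def by (intro sum.mono_neutral_right) auto

lemma indep_coefficients_zero:
  assumes "X \<in> I" "\<And>i. (\<Sum>y\<in>X. c y * v y i) = 0" "x \<in> X"
  shows "c x = 0"
  using assms indep_iff[OF matroid_indep_subset[OF matroid assms(1)]]
  unfolding lin_indep_family_def by blast

lemma indep_finite: "X \<in> I \<Longrightarrow> finite X"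
  using finite_subset[OF matroid_indep_subset[OF matroid] finite_E] .

lemma dependent_iff_linear_relation:
  assumes "X \<subseteq> E"
  shows "X \<notin> I \<longleftrightarrow> (\<exists>c. linear_relation c \<and> support c \<noteq> {} \<and> support c \<subseteq> X)"
proof
  assume "X \<notin> I"
  then obtain c x where c: "\<forall>i. (\<Sum>y\<in>X. c y * v y i) = 0" "x \<in> X" "c x \<noteq> 0"
    using indep_iff[OF assms] unfolding lin_indep_family_def by blast
  define c' where "c' y = (if y \<in> X then c y else 0)" for y
  have supp: "support c' \<subseteq> X" "x \<in> support c'"
    using c assms unfolding support_def c'_def by auto
  have "linear_relation c'"
    unfolding linear_relation_def sum_over_support[OF supp(1) assms]
    using c(1) by (simp add: c'_def)
  with supp show "\<exists>c. linear_relation c \<and> support c \<noteq> {} \<and> support c \<subseteq> X" by blast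
next
  assume "\<exists>c. linear_relation c \<and> support c \<noteq> {} \<and> support c \<subseteq> X"
  then obtain c where c: "linear_relation c" "support c \<noteq> {}" "support c \<subseteq> X" by blast
  have "\<forall>i. (\<Sum>x\<in>X. c x * v x i) = 0"
    using c(1) sum_over_support[OF c(3) assms] unfolding linear_relation_def by metis
  moreover have "\<exists>x\<in>X. c x \<noteq> 0" using c(2,3) unfolding support_def by blast
  ultimately show "X \<notin> I"
    using indep_iff[OF assms] unfolding lin_indep_family_def by blast
qed

lemma linear_relation_diff:
  assumes "linear_relation c" "linear_relation d"
  shows "linear_relation (\<lambda>x. c x - t * d x)"
  using assms unfolding linear_relation_def
  by (simp add: left_diff_distrib sum_subtractf mult.assoc flip: sum_distrib_left)

lemma circuit_through_linear_relation:
  assumes "linear_relation c" "e \<in> E" "c e \<noteq> 0"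
  shows "\<exists>C \<subseteq> support c. circuit E I C \<and> e \<in> C"
  using assms
proof (induction "card (support c)" arbitrary: c rule: less_induct)
  case less
  let ?S = "support c"
  have smaller: "card (support c') < card ?S" if "support c' \<subset> ?S" for c'
    by (intro psubset_card_mono finite_support that)
  have S: "?S \<subseteq> E" "e \<in> ?S" using less.prems unfolding support_def by auto
  have "?S \<notin> I" using dependent_iff_linear_relation[OF S(1)] less.prems(1) S(2) by blast
  show ?case
  proof (cases "\<forall>D. D \<subset> ?S \<longrightarrow> D \<in> I")
    case True
    with \<open>?S \<notin> I\<close> S(1) have "circuit E I ?S" unfolding circuit_def by blast
    with S(2) show ?thesis by blast
  next
    case False
    then obtain D where D: "D \<subset> ?S" "D \<notin> I" by blast
    have "D \<subseteq> E" using D(1) S(1) by blast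
    then obtain d where d: "linear_relation d" "support d \<noteq> {}" "support d \<subseteq> D"
      using dependent_iff_linear_relation D(2) by blast
    have d_sub: "support d \<subset> ?S" using d(3) D(1) by blast
    show ?thesis
    proof (cases "d e = 0")
      case False
      then obtain C where "C \<subseteq> support d" "circuit E I C" "e \<in> C"
        using less.hyps[OF smaller[OF d_sub] d(1) less.prems(2)] by blast
      with d_sub show ?thesis by blast
    next
      case True
      \<comment> \<open>Eliminate \<open>y\<close> from \<open>c\<close> using \<open>d\<close>; the coefficient of \<open>e\<close> survives as \<open>d e = 0\<close>.\<close>
      obtain y where y: "y \<in> support d" using d(2) by blast
      define c' where "c' x = c x - (c y / d y) * d x" for x
      have "linear_relation c'"
        unfolding c'_def using less.prems(1) d(1) by (rule linear_relation_diff)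
      have "support c' \<subseteq> ?S \<union> support d" unfolding support_def c'_def by auto
      moreover have "y \<notin> support c'" "y \<in> ?S"
        using y d_sub unfolding support_def c'_def by auto
      ultimately have c'_sub: "support c' \<subset> ?S" using d_sub by blast
      have "c' e \<noteq> 0" using True less.prems(3) unfolding c'_def by simp
      then obtain C where "C \<subseteq> support c'" "circuit E I C" "e \<in> C"
        using less.hyps[OF smaller[OF c'_sub] \<open>linear_relation c'\<close> less.prems(2)] by blast
      with c'_sub show ?thesis by blast
    qed
  qed
qed

lemma loose_rank_le_card_support:
  assumes "loose E I e" "linear_relation c" "c e \<noteq> 0"
  shows "mrank E I \<le> card (support c)"
proof -
  have "e \<in> E" and loose: "\<And>C. circuit E I C \<Longrightarrow> e \<in> C \<Longrightarrow> mrank E I \<le> card C"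
    using assms(1) unfolding loose_def by auto
  obtain C where C: "C \<subseteq> support c" "circuit E I C" "e \<in> C"
    using circuit_through_linear_relation[OF assms(2) \<open>e \<in> E\<close> assms(3)] by blast
  have "mrank E I \<le> card C" using loose C(2,3) .
  also have "\<dots> \<le> card (support c)" using finite_support C(1) by (rule card_mono)
  finally show ?thesis .
qed

lemma loose_linear_relation_few_zeros:
  assumes "B \<subseteq> E" "card B = mrank E I" "x \<in> B" "loose E I x" "linear_relation c" "c x \<noteq> 0"
  shows "card {b\<in>B. c b = 0} \<le> card (support c - B)"
proof -
  have "finite B" using assms(1) finite_E by (rule finite_subset)
  have "card B \<le> card (support c)"
    unfolding assms(2) by (rule loose_rank_le_card_support[OF assms(4-6)])
  also have "\<dots> = card (support c \<inter> B) + card (support c - B)"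
    using finite_support by (rule card_Int_Diff)
  finally have "card B \<le> card (support c \<inter> B) + card (support c - B)" .
  moreover have "card B = card (support c \<inter> B) + card {b\<in>B. c b = 0}"
  proof -
    have "B \<inter> support c = support c \<inter> B" "B - support c = {b\<in>B. c b = 0}"
      using assms(1) unfolding support_def by blast+
    then show ?thesis using card_Int_Diff[OF \<open>finite B\<close>, of "support c"] by simp
  qed
  ultimately show ?thesis by linarith
qed

lemma fundamental_linear_relation:
  assumes "B \<in> bases E I" "x \<in> E - B"
  obtains c where "linear_relation c" "c x \<noteq> 0" "support c \<subseteq> insert x B"
proof -
  have B: "B \<in> I" "B \<subseteq> E"
    using assms(1) matroid_indep_subset[OF matroid] unfolding bases_def by auto
  have "insert x B \<subseteq> E" using B(2) assms(2) by simp
  moreover have "insert x B \<notin> I" using basis_insert_dependent[OF assms(1)] assms(2) by blast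
  ultimately obtain c where c: "linear_relation c" "support c \<noteq> {}" "support c \<subseteq> insert x B"
    using dependent_iff_linear_relation by blast
  have "c x \<noteq> 0"
  proof
    assume "c x = 0"
    then have "support c \<subseteq> B" using c(3) unfolding support_def by blast
    then show False using dependent_iff_linear_relation[OF B(2)] B(1) c(1,2) by blast
  qed
  with c(1,3) show ?thesis using that by blast
qed

lemma basis_spans:
  assumes "B \<in> bases E I" "x \<in> E"
  shows "\<exists>\<alpha>. \<forall>i. v x i = (\<Sum>b\<in>B. \<alpha> b * v b i)"
proof -
  have B: "B \<subseteq> E" "finite B"
    using assms(1) matroid_indep_subset[OF matroid] indep_finite unfolding bases_def by auto
  show ?thesis
  proof (cases "x \<in> B")
    case True
    with B(2) show ?thesis by (intro exI[of _ "\<lambda>b. of_bool (b = x)"]) simp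
  next
    case False
    then obtain c where c: "linear_relation c" "c x \<noteq> 0" "support c \<subseteq> insert x B"
      using fundamental_linear_relation[OF assms(1)] assms(2) by blast
    have "v x i = (\<Sum>b\<in>B. (- c b / c x) * v b i)" for i
    proof -
      have "0 = (\<Sum>y\<in>insert x B. c y * v y i)"
        using c(1) sum_over_support[OF c(3)] B(1) assms(2) unfolding linear_relation_def by simp
      also have "\<dots> = c x * v x i + (\<Sum>b\<in>B. c b * v b i)"
        using False B(2) by simp
      finally have "c x * v x i = - (\<Sum>b\<in>B. c b * v b i)" by (simp add: eq_neg_iff_add_eq_0)
      then have "v x i = - (\<Sum>b\<in>B. c b * v b i) / c x"
        using \<open>c x \<noteq> 0\<close> by (simp add: field_simps)
      also have "\<dots> = (\<Sum>b\<in>B. (- c b / c x) * v b i)"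
        by (simp add: sum_divide_distrib sum_negf)
      finally show ?thesis .
    qed
    then show ?thesis by (intro exI[of _ "\<lambda>b. - c b / c x"]) blast
  qed
qed

lemma basis_element_coordinates:
  assumes "B \<in> I" "b0 \<in> B" "\<forall>i. v b0 i = (\<Sum>b\<in>B. \<alpha> b * v b i)" "b \<in> B"
  shows "\<alpha> b = of_bool (b = b0)"
proof -
  have "(\<Sum>b\<in>B. (\<alpha> b - of_bool (b = b0)) * v b i) = 0" for i
    using assms(2,3) indep_finite[OF assms(1)] by (simp add: left_diff_distrib sum_subtractf)
  from indep_coefficients_zero[OF assms(1) this assms(4)] show ?thesis by simp
qed

lemma coordinates_linear_relation:
  assumes "B \<subseteq> E" "x \<in> E - B" "\<forall>i. v x i = (\<Sum>b\<in>B. \<alpha> b * v b i)"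
  shows "linear_relation (\<lambda>y. if y \<in> B then \<alpha> y else if y = x then -1 else 0)"
    (is "linear_relation ?c")
proof -
  have "finite B" using assms(1) finite_E by (rule finite_subset)
  have supp: "support ?c \<subseteq> insert x B" "insert x B \<subseteq> E"
    using assms(1,2) unfolding support_def by auto
  have "(\<Sum>y\<in>insert x B. ?c y * v y i) = 0" for i
  proof -
    have "(\<Sum>y\<in>insert x B. ?c y * v y i) = - v x i + (\<Sum>b\<in>B. ?c b * v b i)"
      using assms(2) \<open>finite B\<close> by simp
    also have "(\<Sum>b\<in>B. ?c b * v b i) = (\<Sum>b\<in>B. \<alpha> b * v b i)" by (rule sum.cong) auto
    finally show ?thesis using assms(3) by simp
  qed
  then show ?thesis
    unfolding linear_relation_def using sum_over_support[OF supp] by simp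
qed

lemma coordinates_few_zeros:
  assumes "B \<subseteq> E" "card B = mrank E I" "x \<in> E - B" "\<forall>i. v x i = (\<Sum>b\<in>B. \<alpha> b * v b i)"
    and "b0 \<in> B" "loose E I b0" "\<alpha> b0 \<noteq> 0"
  shows "card {b\<in>B. \<alpha> b = 0} \<le> 1"
proof -
  let ?c = "\<lambda>y. if y \<in> B then \<alpha> y else if y = x then -1 else 0"
  have "card {b\<in>B. \<alpha> b = 0} = card {b\<in>B. ?c b = 0}" by (rule arg_cong[where f = card]) auto
  also have "\<dots> \<le> card (support ?c - B)"
    using loose_linear_relation_few_zeros[OF assms(1,2,5,6)
        coordinates_linear_relation[OF assms(1,3,4)]] assms(5,7)
    by simp
  also have "\<dots> \<le> card {x}" by (rule card_mono) (auto simp: support_def)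
  finally show ?thesis by simp
qed

lemma coordinates_few_agreements:
  assumes "B \<subseteq> E" "card B = mrank E I" "g \<in> E - B" "h \<in> E - B"
    and "\<forall>i. v g i = (\<Sum>b\<in>B. \<alpha> b * v b i)" "\<forall>i. v h i = (\<Sum>b\<in>B. \<beta> b * v b i)"
    and "b0 \<in> B" "loose E I b0" "\<alpha> b0 \<noteq> l * \<beta> b0"
  shows "card {b\<in>B. \<alpha> b = l * \<beta> b} \<le> 2"
proof -
  let ?cg = "\<lambda>y. if y \<in> B then \<alpha> y else if y = g then -1 else 0"
  let ?ch = "\<lambda>y. if y \<in> B then \<beta> y else if y = h then -1 else 0"
  let ?c = "\<lambda>y. ?cg y - l * ?ch y"
  have "linear_relation ?c"
    using linear_relation_diff coordinates_linear_relation[OF assms(1,3,5)]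
      coordinates_linear_relation[OF assms(1,4,6)] .
  have "card {b\<in>B. \<alpha> b = l * \<beta> b} = card {b\<in>B. ?c b = 0}"
    by (rule arg_cong[where f = card]) auto
  also have "\<dots> \<le> card (support ?c - B)"
    using loose_linear_relation_few_zeros[OF assms(1,2,7,8) \<open>linear_relation ?c\<close>] assms(7,9) by simp
  also have "\<dots> \<le> card {g, h}" by (rule card_mono) (auto simp: support_def)
  also have "\<dots> \<le> 2" by (cases "g = h") simp_all
  finally show ?thesis by simp
qed

text \<open>
  A map on \<open>E\<close> that respects all linear relations is the restriction of a linear functional
  on the span of the representing vectors.
\<close>
definition linear_functional :: "('a \<Rightarrow> 'k) \<Rightarrow> bool" where
  "linear_functional \<phi> \<longleftrightarrow> (\<forall>c. linear_relation c \<longrightarrow> (\<Sum>x\<in>E. c x * \<phi> x) = 0)"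

lemma linear_functional_diff:
  assumes "linear_functional \<phi>" "linear_functional \<psi>"
  shows "linear_functional (\<lambda>x. s * \<phi> x - t * \<psi> x)"
proof -
  have "(\<Sum>x\<in>E. c x * (s * \<phi> x - t * \<psi> x))
      = s * (\<Sum>x\<in>E. c x * \<phi> x) - t * (\<Sum>x\<in>E. c x * \<psi> x)" for c
    by (simp add: right_diff_distrib sum_subtractf sum_distrib_left mult.left_commute)
  then show ?thesis using assms unfolding linear_functional_def by simp
qed

lemma linear_functional_coordinate:
  assumes "B \<in> I" "\<forall>x\<in>E. \<forall>i. v x i = (\<Sum>b\<in>B. a x b * v b i)" "b0 \<in> B"
  shows "linear_functional (\<lambda>x. a x b0)"
  unfolding linear_functional_def
proof (intro allI impI)
  fix c assume "linear_relation c"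
  have "(\<Sum>b\<in>B. (\<Sum>x\<in>E. c x * a x b) * v b i) = 0" for i
  proof -
    have "(\<Sum>b\<in>B. (\<Sum>x\<in>E. c x * a x b) * v b i) = (\<Sum>x\<in>E. c x * (\<Sum>b\<in>B. a x b * v b i))"
      by (simp add: sum_distrib_left sum_distrib_right mult.assoc sum.swap[of _ B])
    also have "\<dots> = (\<Sum>x\<in>E. c x * v x i)" by (rule sum.cong) (simp_all add: assms(2))
    also have "\<dots> = 0" using \<open>linear_relation c\<close> unfolding linear_relation_def by simp
    finally show ?thesis .
  qed
  from indep_coefficients_zero[OF assms(1) this assms(3)] show "(\<Sum>x\<in>E. c x * a x b0) = 0" .
qed

lemma cosimple_functional_support:
  assumes "cosimple_matroid E I" "linear_functional \<phi>" "x0 \<in> E" "\<phi> x0 \<noteq> 0"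
  shows "3 \<le> card {x\<in>E. \<phi> x \<noteq> 0}"
proof -
  let ?W = "{x\<in>E. \<phi> x \<noteq> 0}"
  \<comment> \<open>If \<open>?W\<close> avoided a basis, \<open>\<phi>\<close> would vanish on it and hence on \<open>x0\<close>, which it spans.\<close>
  have "?W \<notin> dual_indep E I"
  proof
    assume "?W \<in> dual_indep E I"
    then obtain B where B: "B \<in> bases E I" "?W \<subseteq> E - B" unfolding dual_indep_def by blast
    then have "B \<subseteq> E" "finite B"
      using matroid_indep_subset[OF matroid] indep_finite unfolding bases_def by auto
    have "x0 \<in> E - B" using B(2) assms(3,4) by blast
    then obtain c where c: "linear_relation c" "c x0 \<noteq> 0" "support c \<subseteq> insert x0 B"
      using fundamental_linear_relation[OF B(1)] by blast
    have "insert x0 B \<subseteq> E" using \<open>B \<subseteq> E\<close> assms(3) by simp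
    have "0 = (\<Sum>y\<in>E. c y * \<phi> y)" using assms(2) c(1) unfolding linear_functional_def by simp
    also have "\<dots> = (\<Sum>y\<in>insert x0 B. c y * \<phi> y)" using sum_over_support[OF c(3)] \<open>insert x0 B \<subseteq> E\<close> .
    also have "\<dots> = c x0 * \<phi> x0 + (\<Sum>y\<in>B. c y * \<phi> y)" using \<open>x0 \<in> E - B\<close> \<open>finite B\<close> by simp
    also have "(\<Sum>y\<in>B. c y * \<phi> y) = 0" using B(2) \<open>B \<subseteq> E\<close> by (intro sum.neutral) auto
    finally show False using c(2) assms(4) by simp
  qed
  moreover have "simple_matroid E (dual_indep E I)" using assms(1) unfolding cosimple_matroid_def .
  ultimately show ?thesis using simple_matroid_dependent_card[OF _ finite_E, of "dual_indep E I" ?W]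
    by simp
qed

lemma cosimple_functional_nonzero_outside:
  assumes "cosimple_matroid E I" "linear_functional \<phi>" "x0 \<in> E" "\<phi> x0 \<noteq> 0"
    and "finite B" "card {x\<in>B. \<phi> x \<noteq> 0} \<le> 2"
  shows "\<exists>x\<in>E - B. \<phi> x \<noteq> 0"
proof (rule ccontr)
  assume "\<not> ?thesis"
  then have "{x\<in>E. \<phi> x \<noteq> 0} \<subseteq> {x\<in>B. \<phi> x \<noteq> 0}" by blast
  then have "card {x\<in>E. \<phi> x \<noteq> 0} \<le> card {x\<in>B. \<phi> x \<noteq> 0}"
    using assms(5) by (intro card_mono) simp_all
  with assms(6) have "card {x\<in>E. \<phi> x \<noteq> 0} \<le> 2" by simp
  then show False using cosimple_functional_support[OF assms(1-4)] by simp
qed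

lemma cosimple_coordinate_witness:
  assumes "cosimple_matroid E I" "B \<in> bases E I" "\<forall>x\<in>E. \<forall>i. v x i = (\<Sum>b\<in>B. a x b * v b i)"
    and "e \<in> B" "f \<in> B" "e \<noteq> f" "t \<noteq> 0"
  shows "\<exists>h\<in>E - B. s * a h e \<noteq> t * a h f"
proof -
  have B: "B \<in> I" "B \<subseteq> E" "finite B"
    using assms(2) matroid_indep_subset[OF matroid] indep_finite unfolding bases_def by auto
  have a_B: "a x b = of_bool (b = x)" if "x \<in> B" "b \<in> B" for x b
  proof -
    have "\<forall>i. v x i = (\<Sum>b\<in>B. a x b * v b i)" using assms(3) B(2) that(1) by blast
    from basis_element_coordinates[OF B(1) that(1) this that(2)] show ?thesis .
  qed
  let ?\<phi> = "\<lambda>x. s * a x e - t * a x f"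
  have "linear_functional ?\<phi>"
    using linear_functional_diff[OF linear_functional_coordinate[OF B(1) assms(3) assms(4)]
        linear_functional_coordinate[OF B(1) assms(3) assms(5)]] .
  moreover have "f \<in> E" using B(2) assms(5) by blast
  moreover have "?\<phi> f \<noteq> 0" using a_B[OF assms(5,4)] a_B[OF assms(5,5)] assms(6,7) by simp
  moreover have "card {x\<in>B. ?\<phi> x \<noteq> 0} \<le> 2"
  proof -
    have "{x\<in>B. ?\<phi> x \<noteq> 0} \<subseteq> {e, f}"
    proof
      fix x assume x: "x \<in> {x\<in>B. ?\<phi> x \<noteq> 0}"
      show "x \<in> {e, f}"
      proof (rule ccontr)
        assume "x \<notin> {e, f}"
        then have "a x e = 0" "a x f = 0" using a_B[of x e] a_B[of x f] x assms(4,5) by auto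
        then show False using x by simp
      qed
    qed
    then have "card {x\<in>B. ?\<phi> x \<noteq> 0} \<le> card {e, f}" by (intro card_mono) simp_all
    then show ?thesis using assms(6) by simp
  qed
  ultimately have "\<exists>h\<in>E - B. ?\<phi> h \<noteq> 0"
    by (rule cosimple_functional_nonzero_outside[OF assms(1) _ _ _ B(3)])
  then show ?thesis by simp
qed

lemma two_loose_basis_coordinates:
  assumes "simple_matroid E I" "cosimple_matroid E I" "loose E I e" "loose E I f" "e \<noteq> f"
  obtains B :: "'a set" and \<alpha> \<beta> :: "'a \<Rightarrow> 'k" where "finite B" "card B = mrank E I"
    "card {b\<in>B. \<alpha> b = 0} \<le> 1" "card {b\<in>B. \<beta> b = 0} \<le> 1"
    "\<And>l. card {b\<in>B. \<alpha> b = l * \<beta> b} \<le> 2"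
proof -
  have ef: "e \<in> E" "f \<in> E" using assms(3,4) unfolding loose_def by auto
  have "{e, f} \<in> I"
  proof (rule ccontr)
    assume "{e, f} \<notin> I"
    then have "3 \<le> card {e, f}" using simple_matroid_dependent_card[OF assms(1) finite_E] ef by simp
    then show False using assms(5) by simp
  qed
  then obtain B where B: "{e, f} \<subseteq> B" "B \<in> bases E I" "card B = mrank E I"
    using extend_to_basis_of_rank[OF matroid] by blast
  then have eB: "e \<in> B" "f \<in> B" and "B \<subseteq> E" "finite B"
    using matroid_indep_subset[OF matroid] indep_finite unfolding bases_def by auto
  have "\<forall>x\<in>E. \<exists>\<alpha>. \<forall>i. v x i = (\<Sum>b\<in>B. \<alpha> b * v b i)" using basis_spans[OF B(2)] by blast
  from bchoice[OF this] obtain a where a: "\<forall>x\<in>E. \<forall>i. v x i = (\<Sum>b\<in>B. a x b * v b i)" by blast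
  then have coords: "\<forall>i. v x i = (\<Sum>b\<in>B. a x b * v b i)" if "x \<in> E - B" for x
    using that by blast
  obtain g where g: "g \<in> E - B" "a g e \<noteq> 0"
    using cosimple_coordinate_witness[OF assms(2) B(2) a eB(2,1) assms(5)[symmetric], of 1 0]
    by auto
  obtain h where h: "h \<in> E - B" "a g f * a h e \<noteq> a g e * a h f"
    using cosimple_coordinate_witness[OF assms(2) B(2) a eB assms(5) g(2)] by blast
  show ?thesis
  proof (rule that[of B "a g" "a h"])
    show "finite B" "card B = mrank E I" by fact+
    show "card {b\<in>B. a g b = 0} \<le> 1"
      using coordinates_few_zeros[OF \<open>B \<subseteq> E\<close> B(3) g(1) coords[OF g(1)] eB(1) assms(3) g(2)] .
    have "a h e \<noteq> 0 \<or> a h f \<noteq> 0" using h(2) by auto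
    then show "card {b\<in>B. a h b = 0} \<le> 1"
      using coordinates_few_zeros[OF \<open>B \<subseteq> E\<close> B(3) h(1) coords[OF h(1)]] eB assms(3,4) by blast
    fix l
    have "a g e \<noteq> l * a h e \<or> a g f \<noteq> l * a h f"
      using h(2) by (auto simp: mult.commute mult.left_commute)
    then show "card {b\<in>B. a g b = l * a h b} \<le> 2"
      using coordinates_few_agreements[OF \<open>B \<subseteq> E\<close> B(3) g(1) h(1) coords[OF g(1)]
          coords[OF h(1)]] eB assms(3,4) by blast
  qed
qed

end

lemma card_bound_by_ratio_classes:
  fixes \<alpha> \<beta> :: "'a \<Rightarrow> 'k::{field,finite}"
  assumes "finite B" "card {b\<in>B. \<alpha> b = 0} \<le> 1" "card {b\<in>B. \<beta> b = 0} \<le> 1"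
    and "\<And>l. l \<noteq> 0 \<Longrightarrow> card {b\<in>B. \<alpha> b = l * \<beta> b} \<le> 2"
  shows "card B \<le> 2 * card (UNIV :: 'k set)"
proof -
  let ?L = "UNIV - {0 :: 'k}"
  let ?Z\<alpha> = "{b\<in>B. \<alpha> b = 0}" and ?Z\<beta> = "{b\<in>B. \<beta> b = 0}"
  let ?R = "\<Union>l\<in>?L. {b\<in>B. \<alpha> b = l * \<beta> b}"
  have "B \<subseteq> ?Z\<alpha> \<union> ?Z\<beta> \<union> ?R"
  proof
    fix b assume "b \<in> B"
    show "b \<in> ?Z\<alpha> \<union> ?Z\<beta> \<union> ?R"
    proof (cases "\<alpha> b = 0 \<or> \<beta> b = 0")
      case False
      then have "\<alpha> b / \<beta> b \<in> ?L" "\<alpha> b = (\<alpha> b / \<beta> b) * \<beta> b" by simp_all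
      with \<open>b \<in> B\<close> show ?thesis by blast
    qed (use \<open>b \<in> B\<close> in blast)
  qed
  then have "card B \<le> card (?Z\<alpha> \<union> ?Z\<beta> \<union> ?R)" using assms(1) by (intro card_mono) auto
  also have "\<dots> \<le> card ?Z\<alpha> + card ?Z\<beta> + card ?R"
    by (rule order_trans[OF card_Un_le add_right_mono[OF card_Un_le]])
  finally have "card B \<le> card ?Z\<alpha> + card ?Z\<beta> + card ?R" .
  moreover have "card ?R \<le> 2 * (card (UNIV :: 'k set) - 1)"
  proof -
    have "card ?R \<le> (\<Sum>l\<in>?L. card {b\<in>B. \<alpha> b = l * \<beta> b})" by (rule card_UN_le) simp
    also have "\<dots> \<le> (\<Sum>l\<in>?L. 2)" using assms(4) by (intro sum_mono) auto
    also have "\<dots> = 2 * (card (UNIV :: 'k set) - 1)" by (simp add: card_Diff_singleton)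
    finally show ?thesis .
  qed
  moreover have "card (UNIV :: 'k set) > 0" by (rule finite_UNIV_card_ge_0) simp
  ultimately show ?thesis using assms(2,3) by linarith
qed

theorem corollary4p4:
  fixes E :: "'a set" and \<I> :: "'a set set" and q :: nat and e f :: 'a
  assumes "prime_power q"
    and "card (UNIV :: 'k set) = q"
    and "matroid E \<I>"
    and "simple_matroid E \<I>" and "cosimple_matroid E \<I>"
    and "representable_over TYPE('k::{field,finite}) E \<I>"
    and "loose E \<I> e" and "loose E \<I> f" and "e \<noteq> f"
  shows "mrank E \<I> \<le> 2 * q"
proof -
  \<comment> \<open>Only the size of the field enters.\<close>
  obtain v :: "'a \<Rightarrow> nat \<Rightarrow> 'k" where "\<forall>X. X \<subseteq> E \<longrightarrow> (X \<in> \<I> \<longleftrightarrow> lin_indep_family v X)"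
    using assms(6) unfolding representable_over_def by blast
  with assms(3) interpret represented_matroid E \<I> v by unfold_locales blast+
  obtain B and \<alpha> \<beta> :: "'a \<Rightarrow> 'k" where "finite B" "card B = mrank E \<I>"
    "card {b\<in>B. \<alpha> b = 0} \<le> 1" "card {b\<in>B. \<beta> b = 0} \<le> 1"
    "\<And>l. card {b\<in>B. \<alpha> b = l * \<beta> b} \<le> 2"
    using two_loose_basis_coordinates[OF assms(4,5,7-9)] by blast
  then have "mrank E \<I> \<le> 2 * card (UNIV :: 'k set)"
    using card_bound_by_ratio_classes[of B \<alpha> \<beta>] by simp
  with assms(2) show ?thesis by simp
qed

end
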